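(* Let $a^*_{\mathsf A},a^*_{\mathsf B}\ge1$ and $l^*_{\mathsf A},l^*_{\mathsf B}\in[0,1)$. On each mode $X\in\{\mathsf A,\mathsf B\}$ of a two-mode system apply the amplification channel with parameter $a^*_X$ followed by the loss channel with parameter $l^*_X$. The resulting product channel maps every two-mode Gaussian state to a separable state (i.e. annihilates entanglement of all two-mode Gaussian states) if and only if $$\frac1{a^*_{\mathsf A}}+\frac1{a^*_{\mathsf B}}\le1.$$
   Context: Covariance-matrix convention: vacuum has covariance matrix $\mathbb 1/2$. Loss with parameter $l\in[0,1]$: $V\mapsto(1-l)V+l\,\mathbb 1/2$. Amplification with parameter $a\ge1$: $V\mapsto aV+(a-1)\mathbb 1/2$. Separable means separable across the $\mathsf A$–$\mathsf B$ partition. *)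

theory Defs
  imports Complex_Main
begin

text \<open>Covariance matrices of n-mode systems are represented as functions
  nat => nat => real, only entries with indices < 2n being relevant.
  Quadrature ordering (x_1,p_1,x_2,p_2,...). Vacuum has covariance 1/2.\<close>

definition symp_form :: "nat \<Rightarrow> nat \<Rightarrow> nat \<Rightarrow> real" where
  "symp_form n i j =
     (if i < 2*n \<and> j < 2*n \<and> even i \<and> j = i + 1 then 1
      else if i < 2*n \<and> j < 2*n \<and> odd i \<and> i = j + 1 then -1 else 0)"

definition is_cm :: "nat \<Rightarrow> (nat \<Rightarrow> nat \<Rightarrow> real) \<Rightarrow> bool" where
  "is_cm n V \<longleftrightarrow>
     (\<forall>i<2*n. \<forall>j<2*n. V i j = V j i) \<and>
     (\<forall>z :: nat \<Rightarrow> complex.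
        let q = (\<Sum>i<2*n. \<Sum>j<2*n. cnj (z i) *
                   (complex_of_real (V i j) + \<i> * complex_of_real (symp_form n i j) / 2) * z j)
        in Im q = 0 \<and> 0 \<le> Re q)"

definition mat_le :: "nat \<Rightarrow> (nat \<Rightarrow> nat \<Rightarrow> real) \<Rightarrow> (nat \<Rightarrow> nat \<Rightarrow> real) \<Rightarrow> bool" where
  "mat_le n W V \<longleftrightarrow>
     (\<forall>x :: nat \<Rightarrow> real. 0 \<le> (\<Sum>i<2*n. \<Sum>j<2*n. x i * (V i j - W i j) * x j))"

definition direct_sum_1_1 ::
  "(nat \<Rightarrow> nat \<Rightarrow> real) \<Rightarrow> (nat \<Rightarrow> nat \<Rightarrow> real) \<Rightarrow> nat \<Rightarrow> nat \<Rightarrow> real" where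
  "direct_sum_1_1 GA GB i j =
     (if i < 2 \<and> j < 2 then GA i j
      else if 2 \<le> i \<and> 2 \<le> j then GB (i - 2) (j - 2) else 0)"

text \<open>Separability of a two-mode Gaussian state with covariance matrix V across
  the A|B split (Werner--Wolf criterion): V >= gamma_A (+) gamma_B for some
  valid single-mode covariance matrices gamma_A, gamma_B.\<close>
definition gauss_separable_2 :: "(nat \<Rightarrow> nat \<Rightarrow> real) \<Rightarrow> bool" where
  "gauss_separable_2 V \<longleftrightarrow>
     (\<exists>GA GB. is_cm 1 GA \<and> is_cm 1 GB \<and> mat_le 2 (direct_sum_1_1 GA GB) V)"

definition local_channel_2 ::
  "real \<Rightarrow> real \<Rightarrow> real \<Rightarrow> real \<Rightarrow> (nat \<Rightarrow> nat \<Rightarrow> real) \<Rightarrow> nat \<Rightarrow> nat \<Rightarrow> real" where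
  "local_channel_2 xA yA xB yB V i j =
     (let xf = (\<lambda>k. if k < 2 then xA else xB);
          yf = (\<lambda>k. if k < 2 then yA else yB)
      in xf i * V i j * xf j + (if i = j then yf i else 0))"

text \<open>Amplification a: V -> a V + (a-1) 1/2 ; loss l: V -> (1-l) V + l 1/2.\<close>
definition amp_2 :: "real \<Rightarrow> real \<Rightarrow> (nat \<Rightarrow> nat \<Rightarrow> real) \<Rightarrow> nat \<Rightarrow> nat \<Rightarrow> real" where
  "amp_2 aA aB = local_channel_2 (sqrt aA) ((aA - 1) / 2) (sqrt aB) ((aB - 1) / 2)"

definition loss_2 :: "real \<Rightarrow> real \<Rightarrow> (nat \<Rightarrow> nat \<Rightarrow> real) \<Rightarrow> nat \<Rightarrow> nat \<Rightarrow> real" where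
  "loss_2 lA lB = local_channel_2 (sqrt (1 - lA)) (lA / 2) (sqrt (1 - lB)) (lB / 2)"

end

theory Submission
  imports Defs
begin

text \<open>Amplification followed by loss acts on each mode as \<open>V \<mapsto> t V + n \<one>\<close> with gain
  \<open>t = (1 - l) a\<close> and noise \<open>n = ((1 - l)(a - 1) + l)/2\<close>, and \<open>(2n - 1)/t = 1 - 2/a\<close>.
  For a product of such channels (physical ones, \<open>|1 - t| \<le> 2n\<close>), every output is separable
  iff \<open>(2n\<^sub>A - 1)/t\<^sub>A + (2n\<^sub>B - 1)/t\<^sub>B \<ge> 0\<close>.

  Sufficiency: say \<open>2n\<^sub>B \<ge> 1\<close>. Interpolating between \<open>V + i\<Omega>/2 \<ge> 0\<close> and its complex
  conjugate gives \<open>V + i\<kappa>\<Omega>/2 \<ge> 0\<close> for \<open>|\<kappa>| \<le> 1\<close>; for a suitable \<open>\<kappa>\<close> the noise added by the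
  channel absorbs the rest of the symplectic form, so that the output minus the vacuum on B is
  positive with respect to the symplectic form of A alone. Its Schur complement over B is a
  covariance matrix \<open>\<gamma>\<^sub>A\<close>, and the output dominates \<open>\<gamma>\<^sub>A \<oplus> \<one>/2\<close>. The case
  \<open>2n\<^sub>A \<ge> 1\<close> follows by exchanging the modes.

  Necessity: a two-mode squeezed input has EPR variances \<open>1/k\<close>, which the channel turns into
  \<open>1/k + n\<^sub>A/t\<^sub>A + n\<^sub>B/t\<^sub>B\<close> after rescaling; the EPR bound for separable states then forces
  the condition as \<open>k \<rightarrow> \<infinity>\<close>.\<close>

section \<open>Covariance matrices as real quadratic forms\<close>

definition quad_form :: "nat \<Rightarrow> (nat \<Rightarrow> nat \<Rightarrow> real) \<Rightarrow> (nat \<Rightarrow> real) \<Rightarrow> real" where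
  "quad_form n M x = (\<Sum>i<2*n. \<Sum>j<2*n. x i * M i j * x j)"

definition symp_pairing :: "nat \<Rightarrow> (nat \<Rightarrow> real) \<Rightarrow> (nat \<Rightarrow> real) \<Rightarrow> real" where
  "symp_pairing n x y = (\<Sum>i<2*n. \<Sum>j<2*n. x i * symp_form n i j * y j)"

definition sym_mat :: "nat \<Rightarrow> (nat \<Rightarrow> nat \<Rightarrow> real) \<Rightarrow> bool" where
  "sym_mat n M \<longleftrightarrow> (\<forall>i<2*n. \<forall>j<2*n. M i j = M j i)"

lemma symp_form_antisym: "symp_form n j i = - symp_form n i j"
  unfolding symp_form_def by auto

lemma mat_le_iff_quad_form: "mat_le n W V \<longleftrightarrow> (\<forall>x. quad_form n W x \<le> quad_form n V x)"
proof -
  have "(\<Sum>i<2*n. \<Sum>j<2*n. x i * (V i j - W i j) * x j) = quad_form n V x - quad_form n W x"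
    for x unfolding quad_form_def by (simp add: algebra_simps flip: sum_subtractf)
  then show ?thesis unfolding mat_le_def by simp
qed

lemma double_sum_antisym:
  fixes f :: "'a \<Rightarrow> 'a \<Rightarrow> real"
  assumes "\<And>i j. i \<in> I \<Longrightarrow> j \<in> I \<Longrightarrow> f j i = - f i j"
  shows "(\<Sum>i\<in>I. \<Sum>j\<in>I. f i j) = 0"
proof -
  have "(\<Sum>i\<in>I. \<Sum>j\<in>I. f i j) = (\<Sum>i\<in>I. \<Sum>j\<in>I. f j i)"
    by (rule sum.swap)
  also have "\<dots> = (\<Sum>i\<in>I. \<Sum>j\<in>I. - f i j)"
    using assms by (intro sum.cong refl) blast
  also have "\<dots> = - (\<Sum>i\<in>I. \<Sum>j\<in>I. f i j)"
    by (simp add: sum_negf)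
  finally show ?thesis by linarith
qed

lemma hermitian_form_Re:
  fixes x y :: "nat \<Rightarrow> real"
  defines "z \<equiv> \<lambda>i. Complex (x i) (y i)"
  shows "Re (\<Sum>i<2*n. \<Sum>j<2*n. cnj (z i) *
            (complex_of_real (V i j) + \<i> * complex_of_real (symp_form n i j) / 2) * z j)
       = quad_form n V x + quad_form n V y - symp_pairing n x y"
proof -
  let ?I = "{..<2*n}"
  have "(\<Sum>i\<in>?I. \<Sum>j\<in>?I. x i * symp_form n i j * y j + y i * symp_form n i j * x j) = 0"
  proof (rule double_sum_antisym)
    fix i j
    show "x j * symp_form n j i * y i + y j * symp_form n j i * x i
        = - (x i * symp_form n i j * y j + y i * symp_form n i j * x j)"
      using symp_form_antisym[of n j i] by (simp add: algebra_simps)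
  qed
  then have swap: "(\<Sum>i\<in>?I. \<Sum>j\<in>?I. y i * symp_form n i j * x j) = - symp_pairing n x y"
    unfolding symp_pairing_def sum.distrib by (simp add: eq_neg_iff_add_eq_0 add.commute)
  have "Re (\<Sum>i\<in>?I. \<Sum>j\<in>?I. cnj (z i) *
            (complex_of_real (V i j) + \<i> * complex_of_real (symp_form n i j) / 2) * z j)
      = (\<Sum>i\<in>?I. \<Sum>j\<in>?I. x i * V i j * x j + y i * V i j * y j
            + (y i * symp_form n i j * x j - x i * symp_form n i j * y j) / 2)"
    by (simp add: z_def algebra_simps)
  also have "\<dots> = quad_form n V x + quad_form n V y - symp_pairing n x y"
    using swap by (simp add: quad_form_def symp_pairing_def sum.distrib sum_subtractf
        sum_divide_distrib[symmetric])
  finally show ?thesis .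
qed

lemma hermitian_form_Im:
  fixes x y :: "nat \<Rightarrow> real"
  assumes "sym_mat n V"
  defines "z \<equiv> \<lambda>i. Complex (x i) (y i)"
  shows "Im (\<Sum>i<2*n. \<Sum>j<2*n. cnj (z i) *
            (complex_of_real (V i j) + \<i> * complex_of_real (symp_form n i j) / 2) * z j) = 0"
proof -
  let ?I = "{..<2*n}"
  have "Im (\<Sum>i\<in>?I. \<Sum>j\<in>?I. cnj (z i) *
            (complex_of_real (V i j) + \<i> * complex_of_real (symp_form n i j) / 2) * z j)
      = (\<Sum>i\<in>?I. \<Sum>j\<in>?I. V i j * (x i * y j - y i * x j)
            + symp_form n i j * (x i * x j + y i * y j) / 2)"
    by (simp add: z_def algebra_simps)
  also have "\<dots> = 0"
  proof (rule double_sum_antisym)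
    fix i j
    assume "i \<in> ?I" "j \<in> ?I"
    then have "V j i = V i j" using assms(1) unfolding sym_mat_def by simp
    then show "V j i * (x j * y i - y j * x i) + symp_form n j i * (x j * x i + y j * y i) / 2
        = - (V i j * (x i * y j - y i * x j) + symp_form n i j * (x i * x j + y i * y j) / 2)"
      using symp_form_antisym[of n j i] by (simp add: field_simps)
  qed
  finally show ?thesis .
qed

lemma is_cm_iff:
  "is_cm n V \<longleftrightarrow> sym_mat n V \<and> (\<forall>x y. symp_pairing n x y \<le> quad_form n V x + quad_form n V y)"
proof
  assume cm: "is_cm n V"
  show "sym_mat n V \<and> (\<forall>x y. symp_pairing n x y \<le> quad_form n V x + quad_form n V y)"
  proof (intro conjI allI)
    show "sym_mat n V" using cm unfolding is_cm_def sym_mat_def by blast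
    fix x y :: "nat \<Rightarrow> real"
    let ?z = "\<lambda>i. Complex (x i) (y i)"
    have "0 \<le> Re (\<Sum>i<2*n. \<Sum>j<2*n. cnj (?z i) *
            (complex_of_real (V i j) + \<i> * complex_of_real (symp_form n i j) / 2) * ?z j)"
      using cm unfolding is_cm_def Let_def by (elim conjE allE[of _ ?z]) simp
    then show "symp_pairing n x y \<le> quad_form n V x + quad_form n V y"
      unfolding hermitian_form_Re by simp
  qed
next
  assume "sym_mat n V \<and> (\<forall>x y. symp_pairing n x y \<le> quad_form n V x + quad_form n V y)"
  then have sym: "sym_mat n V"
    and le: "\<And>x y. symp_pairing n x y \<le> quad_form n V x + quad_form n V y"
    by auto
  show "is_cm n V"
    unfolding is_cm_def Let_def
  proof (intro conjI allI impI)
    show "V i j = V j i" if "i < 2*n" "j < 2*n" for i j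
      using sym that unfolding sym_mat_def by blast
    fix z :: "nat \<Rightarrow> complex"
    show "Im (\<Sum>i<2*n. \<Sum>j<2*n. cnj (z i) *
            (complex_of_real (V i j) + \<i> * complex_of_real (symp_form n i j) / 2) * z j) = 0"
      using hermitian_form_Im[OF sym, where x = "\<lambda>i. Re (z i)" and y = "\<lambda>i. Im (z i)"]
      by (simp only: complex_surj)
    show "0 \<le> Re (\<Sum>i<2*n. \<Sum>j<2*n. cnj (z i) *
            (complex_of_real (V i j) + \<i> * complex_of_real (symp_form n i j) / 2) * z j)"
      using hermitian_form_Re[where x = "\<lambda>i. Re (z i)" and y = "\<lambda>i. Im (z i)" and V = V and n = n]
        le[of "\<lambda>i. Re (z i)" "\<lambda>i. Im (z i)"]
      by (simp only: complex_surj)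
  qed
qed

definition qform1 :: "(nat \<Rightarrow> nat \<Rightarrow> real) \<Rightarrow> real \<Rightarrow> real \<Rightarrow> real" where
  "qform1 G u0 u1 = G 0 0 * u0^2 + 2 * G 0 1 * u0 * u1 + G 1 1 * u1^2"

definition qform2 :: "(nat \<Rightarrow> nat \<Rightarrow> real) \<Rightarrow> real \<Rightarrow> real \<Rightarrow> real \<Rightarrow> real \<Rightarrow> real" where
  "qform2 V x0 x1 x2 x3 =
     V 0 0 * x0^2 + V 1 1 * x1^2 + V 2 2 * x2^2 + V 3 3 * x3^2
     + 2 * (V 0 1 * x0 * x1 + V 0 2 * x0 * x2 + V 0 3 * x0 * x3
            + V 1 2 * x1 * x2 + V 1 3 * x1 * x3 + V 2 3 * x2 * x3)"

lemma lessThan_2: "{..<2::nat} = {0, 1}" and lessThan_4: "{..<4::nat} = {0, 1, 2, 3}"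
  by auto

lemma sym_mat_1_iff: "sym_mat 1 G \<longleftrightarrow> G 1 0 = G 0 1"
  unfolding sym_mat_def by (auto simp: All_less_Suc numeral_eq_Suc)

lemma sym_mat_2_iff:
  "sym_mat 2 V \<longleftrightarrow> V 1 0 = V 0 1 \<and> V 2 0 = V 0 2 \<and> V 3 0 = V 0 3 \<and>
     V 2 1 = V 1 2 \<and> V 3 1 = V 1 3 \<and> V 3 2 = V 2 3"
  unfolding sym_mat_def by (auto simp: All_less_Suc numeral_eq_Suc)

lemma quad_form_1:
  assumes "sym_mat 1 G" shows "quad_form 1 G x = qform1 G (x 0) (x 1)"
  using assms unfolding sym_mat_1_iff
  by (simp add: quad_form_def qform1_def lessThan_2 power2_eq_square algebra_simps)

lemma quad_form_2:
  assumes "sym_mat 2 V" shows "quad_form 2 V x = qform2 V (x 0) (x 1) (x 2) (x 3)"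
  using assms unfolding sym_mat_2_iff
  by (simp add: quad_form_def qform2_def lessThan_4 power2_eq_square algebra_simps)

lemma symp_pairing_1: "symp_pairing 1 x y = x 0 * y 1 - x 1 * y 0"
  by (simp add: symp_pairing_def symp_form_def lessThan_2)

lemma symp_pairing_2: "symp_pairing 2 x y = x 0 * y 1 - x 1 * y 0 + x 2 * y 3 - x 3 * y 2"
  by (simp add: symp_pairing_def symp_form_def lessThan_4)

lemma is_cm_1_iff:
  "is_cm 1 G \<longleftrightarrow> G 1 0 = G 0 1 \<and>
     (\<forall>u0 u1 v0 v1. u0 * v1 - u1 * v0 \<le> qform1 G u0 u1 + qform1 G v0 v1)"
proof -
  have "(\<forall>x y. symp_pairing 1 x y \<le> quad_form 1 G x + quad_form 1 G y) \<longleftrightarrow>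
        (\<forall>u0 u1 v0 v1. u0 * v1 - u1 * v0 \<le> qform1 G u0 u1 + qform1 G v0 v1)"
    if "sym_mat 1 G"
  proof
    assume le: "\<forall>x y. symp_pairing 1 x y \<le> quad_form 1 G x + quad_form 1 G y"
    show "\<forall>u0 u1 v0 v1. u0 * v1 - u1 * v0 \<le> qform1 G u0 u1 + qform1 G v0 v1"
    proof (intro allI)
      fix u0 u1 v0 v1 :: real
      show "u0 * v1 - u1 * v0 \<le> qform1 G u0 u1 + qform1 G v0 v1"
        using le[rule_format, of "(!) [u0, u1]" "(!) [v0, v1]"]
        unfolding quad_form_1[OF that] symp_pairing_1 by simp
    qed
  qed (simp only: quad_form_1[OF that] symp_pairing_1, blast)
  then show ?thesis unfolding is_cm_iff sym_mat_1_iff by blast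
qed

lemma is_cm_2_iff:
  "is_cm 2 V \<longleftrightarrow> sym_mat 2 V \<and>
     (\<forall>x0 x1 x2 x3 y0 y1 y2 y3. x0 * y1 - x1 * y0 + x2 * y3 - x3 * y2
        \<le> qform2 V x0 x1 x2 x3 + qform2 V y0 y1 y2 y3)"
proof -
  have "(\<forall>x y. symp_pairing 2 x y \<le> quad_form 2 V x + quad_form 2 V y) \<longleftrightarrow>
        (\<forall>x0 x1 x2 x3 y0 y1 y2 y3. x0 * y1 - x1 * y0 + x2 * y3 - x3 * y2
          \<le> qform2 V x0 x1 x2 x3 + qform2 V y0 y1 y2 y3)"
    if "sym_mat 2 V"
  proof
    assume le: "\<forall>x y. symp_pairing 2 x y \<le> quad_form 2 V x + quad_form 2 V y"
    show "\<forall>x0 x1 x2 x3 y0 y1 y2 y3. x0 * y1 - x1 * y0 + x2 * y3 - x3 * y2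
          \<le> qform2 V x0 x1 x2 x3 + qform2 V y0 y1 y2 y3"
    proof (intro allI)
      fix x0 x1 x2 x3 y0 y1 y2 y3 :: real
      show "x0 * y1 - x1 * y0 + x2 * y3 - x3 * y2 \<le> qform2 V x0 x1 x2 x3 + qform2 V y0 y1 y2 y3"
        using le[rule_format, of "(!) [x0, x1, x2, x3]" "(!) [y0, y1, y2, y3]"]
        unfolding quad_form_2[OF that] symp_pairing_2 by simp
    qed
  qed (simp only: quad_form_2[OF that] symp_pairing_2, blast)
  then show ?thesis unfolding is_cm_iff by blast
qed

lemma mat_le_2_iff:
  assumes "sym_mat 2 W" and "sym_mat 2 V"
  shows "mat_le 2 W V \<longleftrightarrow> (\<forall>x0 x1 x2 x3. qform2 W x0 x1 x2 x3 \<le> qform2 V x0 x1 x2 x3)"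
proof
  assume le: "mat_le 2 W V"
  show "\<forall>x0 x1 x2 x3. qform2 W x0 x1 x2 x3 \<le> qform2 V x0 x1 x2 x3"
  proof (intro allI)
    fix x0 x1 x2 x3 :: real
    show "qform2 W x0 x1 x2 x3 \<le> qform2 V x0 x1 x2 x3"
      using le unfolding mat_le_iff_quad_form
      by (elim allE[of _ "(!) [x0, x1, x2, x3]"]) (simp add: quad_form_2 assms)
  qed
qed (simp only: mat_le_iff_quad_form quad_form_2 assms, blast)

lemma mult_symp_le:
  fixes c n p q r s :: real
  assumes "\<bar>c\<bar> \<le> 2 * n"
  shows "c * (p * s - q * r) \<le> n * (p^2 + q^2 + r^2 + s^2)"
proof -
  let ?\<sigma> = "p * s - q * r" and ?N = "p^2 + q^2 + r^2 + s^2"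
  have "0 \<le> (p - s)^2 + (q + r)^2" and "0 \<le> (p + s)^2 + (q - r)^2"
    by simp_all
  then have "2 * ?\<sigma> \<le> ?N" and "- (2 * ?\<sigma>) \<le> ?N"
    by (simp_all add: power2_eq_square algebra_simps)
  then have N: "2 * \<bar>?\<sigma>\<bar> \<le> ?N"
    by (simp add: abs_if)
  have "c * ?\<sigma> \<le> \<bar>c\<bar> * \<bar>?\<sigma>\<bar>"
    using abs_ge_self[of "c * ?\<sigma>"] by (simp add: abs_mult)
  also have "\<dots> \<le> (2 * n) * \<bar>?\<sigma>\<bar>"
    using assms by (rule mult_right_mono) simp
  also have "\<dots> = n * (2 * \<bar>?\<sigma>\<bar>)"
    by simp
  also have "\<dots> \<le> n * ?N"
    using N assms by (intro mult_left_mono) auto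
  finally show ?thesis .
qed

lemma is_cm_1_vacuum: "is_cm 1 (\<lambda>i j. if i = j then 1/2 else 0)"
proof -
  have "u0 * v1 - u1 * v0 \<le> (u0^2 + u1^2) / 2 + (v0^2 + v1^2) / 2" for u0 u1 v0 v1 :: real
    using mult_symp_le[where c = 1 and n = "1/2" and p = u0 and q = u1 and r = v0 and s = v1]
    by (simp add: field_simps)
  then show ?thesis unfolding is_cm_1_iff qform1_def by (simp add: add_divide_distrib add.assoc)
qed

lemma is_cm_1_uncertainty:
  assumes "is_cm 1 G"
  shows "0 < G 0 0" and "0 < G 1 1" and "1/4 \<le> G 0 0 * G 1 1 - (G 0 1)^2"
proof -
  have le: "p * s - q * r \<le> qform1 G p q + qform1 G r s" for p q r s
    using assms unfolding is_cm_1_iff by blast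
  show pos0: "0 < G 0 0"
  proof (rule ccontr)
    assume "\<not> 0 < G 0 0"
    then have "G 0 0 * (1 + \<bar>G 1 1\<bar>)^2 \<le> 0" by (simp add: mult_nonpos_nonneg)
    then show False
      using le[where p = "1 + \<bar>G 1 1\<bar>" and q = 0 and r = 0 and s = 1] by (simp add: qform1_def)
  qed
  show pos1: "0 < G 1 1"
  proof (rule ccontr)
    assume "\<not> 0 < G 1 1"
    then have "G 1 1 * (1 + \<bar>G 0 0\<bar>)^2 \<le> 0" by (simp add: mult_nonpos_nonneg)
    then show False
      using le[where p = 1 and q = 0 and r = 0 and s = "1 + \<bar>G 0 0\<bar>"] by (simp add: qform1_def)
  qed
  have "0 \<le> G 1 1 * (G 0 0 * G 1 1 - (G 0 1)^2 - 1/4)"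
    using le[where p = "G 1 1" and q = "- G 0 1" and r = 0 and s = "1/2"]
    by (simp add: qform1_def power2_eq_square algebra_simps)
  then show "1/4 \<le> G 0 0 * G 1 1 - (G 0 1)^2"
    using pos1 by (simp add: zero_le_mult_iff)
qed

lemma is_cm_2_mode_B:
  assumes "is_cm 2 V"
  shows "is_cm 1 (\<lambda>i j. V ([2, 3] ! i) ([2, 3] ! j))"
  unfolding is_cm_1_iff
proof (intro conjI allI)
  show "V ([2, 3] ! 1) ([2, 3] ! 0) = V ([2, 3] ! 0) ([2, 3] ! 1)"
    using assms by (simp add: is_cm_2_iff sym_mat_2_iff)
  fix p q r s :: real
  have "0 * 0 - 0 * 0 + p * s - q * r \<le> qform2 V 0 0 p q + qform2 V 0 0 r s"
    using assms unfolding is_cm_2_iff by blast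
  then show "p * s - q * r \<le> qform1 (\<lambda>i j. V ([2, 3] ! i) ([2, 3] ! j)) p q
      + qform1 (\<lambda>i j. V ([2, 3] ! i) ([2, 3] ! j)) r s"
    by (simp add: qform1_def qform2_def)
qed

lemma is_cm_2_scaled_symp_le:
  assumes "is_cm 2 V" and "\<bar>\<kappa>\<bar> \<le> 1"
  shows "\<kappa> * (x0 * y1 - x1 * y0 + x2 * y3 - x3 * y2)
    \<le> qform2 V x0 x1 x2 x3 + qform2 V y0 y1 y2 y3"
proof -
  let ?\<sigma> = "x0 * y1 - x1 * y0 + x2 * y3 - x3 * y2"
    and ?Q = "qform2 V x0 x1 x2 x3 + qform2 V y0 y1 y2 y3"
  have "?\<sigma> \<le> ?Q"
    using assms(1) unfolding is_cm_2_iff by blast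
  moreover have "x0 * (- y1) - x1 * (- y0) + x2 * (- y3) - x3 * (- y2)
      \<le> qform2 V x0 x1 x2 x3 + qform2 V (- y0) (- y1) (- y2) (- y3)"
    using assms(1) unfolding is_cm_2_iff by blast
  then have "- ?\<sigma> \<le> ?Q"
    by (simp add: qform2_def)
  ultimately have "\<bar>?\<sigma>\<bar> \<le> ?Q"
    by linarith
  have "\<kappa> * ?\<sigma> \<le> \<bar>\<kappa>\<bar> * \<bar>?\<sigma>\<bar>"
    using abs_ge_self[of "\<kappa> * ?\<sigma>"] by (simp add: abs_mult)
  also have "\<dots> \<le> \<bar>?\<sigma>\<bar>"
    using assms(2) by (simp add: mult_left_le_one_le)
  also have "\<dots> \<le> ?Q"
    by fact
  finally show ?thesis .
qed

text \<open>Only indices below 4 are meaningful; beyond them the list lookup is unspecified.\<close>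

definition swap_modes :: "(nat \<Rightarrow> nat \<Rightarrow> real) \<Rightarrow> nat \<Rightarrow> nat \<Rightarrow> real" where
  "swap_modes V i j = V ([2, 3, 0, 1] ! i) ([2, 3, 0, 1] ! j)"

lemma sym_mat_swap_modes: "sym_mat 2 V \<Longrightarrow> sym_mat 2 (swap_modes V)"
  by (simp add: sym_mat_2_iff swap_modes_def)

lemma qform2_swap_modes:
  "sym_mat 2 V \<Longrightarrow> qform2 (swap_modes V) x0 x1 x2 x3 = qform2 V x2 x3 x0 x1"
  by (simp add: sym_mat_2_iff swap_modes_def qform2_def algebra_simps)

lemma is_cm_2_swap_modes:
  assumes "is_cm 2 V"
  shows "is_cm 2 (swap_modes V)"
proof -
  have sym: "sym_mat 2 V"
    and le: "\<forall>x0 x1 x2 x3 y0 y1 y2 y3. x0 * y1 - x1 * y0 + x2 * y3 - x3 * y2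
               \<le> qform2 V x0 x1 x2 x3 + qform2 V y0 y1 y2 y3"
    using assms unfolding is_cm_2_iff by blast+
  show ?thesis
    unfolding is_cm_2_iff qform2_swap_modes[OF sym]
  proof (intro conjI allI sym_mat_swap_modes[OF sym])
    fix x0 x1 x2 x3 y0 y1 y2 y3 :: real
    have "x2 * y3 - x3 * y2 + x0 * y1 - x1 * y0 \<le> qform2 V x2 x3 x0 x1 + qform2 V y2 y3 y0 y1"
      using le by blast
    then show "x0 * y1 - x1 * y0 + x2 * y3 - x3 * y2 \<le> qform2 V x2 x3 x0 x1 + qform2 V y2 y3 y0 y1"
      by simp
  qed
qed

lemma sym_mat_direct_sum_1_1:
  "sym_mat 1 G \<Longrightarrow> sym_mat 1 H \<Longrightarrow> sym_mat 2 (direct_sum_1_1 G H)"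
  unfolding sym_mat_1_iff sym_mat_2_iff direct_sum_1_1_def by simp

lemma qform2_direct_sum_1_1:
  "qform2 (direct_sum_1_1 G H) x0 x1 x2 x3 = qform1 G x0 x1 + qform1 H x2 x3"
  by (simp add: qform1_def qform2_def direct_sum_1_1_def)

lemma gauss_separable_2_iff:
  assumes "sym_mat 2 W"
  shows "gauss_separable_2 W \<longleftrightarrow> (\<exists>GA GB. is_cm 1 GA \<and> is_cm 1 GB \<and>
           (\<forall>x0 x1 x2 x3. qform1 GA x0 x1 + qform1 GB x2 x3 \<le> qform2 W x0 x1 x2 x3))"
proof -
  have "mat_le 2 (direct_sum_1_1 GA GB) W \<longleftrightarrow>
          (\<forall>x0 x1 x2 x3. qform1 GA x0 x1 + qform1 GB x2 x3 \<le> qform2 W x0 x1 x2 x3)"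
    if "is_cm 1 GA" "is_cm 1 GB" for GA GB
    using that assms
    by (simp add: mat_le_2_iff sym_mat_direct_sum_1_1 is_cm_iff qform2_direct_sum_1_1)
  then show ?thesis unfolding gauss_separable_2_def by blast
qed

lemma gauss_separable_2_swap_modes:
  assumes "sym_mat 2 W" and "gauss_separable_2 (swap_modes W)"
  shows "gauss_separable_2 W"
proof -
  obtain GA GB where "is_cm 1 GA" "is_cm 1 GB"
    and le: "\<forall>x0 x1 x2 x3. qform1 GA x0 x1 + qform1 GB x2 x3 \<le> qform2 W x2 x3 x0 x1"
    using assms gauss_separable_2_iff[OF sym_mat_swap_modes] qform2_swap_modes by metis
  moreover have "\<forall>x0 x1 x2 x3. qform1 GB x0 x1 + qform1 GA x2 x3 \<le> qform2 W x0 x1 x2 x3"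
    using le by (metis add.commute)
  ultimately show ?thesis
    unfolding gauss_separable_2_iff[OF assms(1)] by blast
qed

section \<open>Schur complement over mode B\<close>

text \<open>For \<open>M = [[A, C], [C\<^sup>T, P]]\<close> with \<open>P\<close> the block of mode B, this is
  \<open>A - C P\<^sup>-\<^sup>1 C\<^sup>T\<close>, with \<open>P\<^sup>-\<^sup>1\<close> written through the adjugate of \<open>P\<close>.\<close>

definition schur_compl_B :: "(nat \<Rightarrow> nat \<Rightarrow> real) \<Rightarrow> nat \<Rightarrow> nat \<Rightarrow> real" where
  "schur_compl_B M i j = M i j
     - (M 3 3 * M i 2 * M j 2 - M 2 3 * (M i 2 * M j 3 + M i 3 * M j 2) + M 2 2 * M i 3 * M j 3)
       / (M 2 2 * M 3 3 - (M 2 3)^2)"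

lemma adjugate_form_nonneg:
  fixes p q r w0 w1 :: real
  assumes "0 < p" and "0 < p * r - q^2"
  shows "0 \<le> r * w0^2 - 2 * q * w0 * w1 + p * w1^2"
proof -
  have "p * (r * w0^2 - 2 * q * w0 * w1 + p * w1^2) = (p * w1 - q * w0)^2 + (p * r - q^2) * w0^2"
    by (simp add: power2_eq_square algebra_simps)
  also have "\<dots> \<ge> 0"
    using assms(2) by simp
  finally show ?thesis
    using assms(1) by (simp add: zero_le_mult_iff)
qed

lemma qform2_minus_schur_compl_B:
  fixes x0 x1 x2 x3 :: real
  assumes d: "M 2 2 * M 3 3 - (M 2 3)^2 \<noteq> 0"
  defines "w0 \<equiv> M 0 2 * x0 + M 1 2 * x1 + M 2 2 * x2 + M 2 3 * x3"
    and "w1 \<equiv> M 0 3 * x0 + M 1 3 * x1 + M 2 3 * x2 + M 3 3 * x3"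
  shows "(M 2 2 * M 3 3 - (M 2 3)^2) * (qform2 M x0 x1 x2 x3 - qform1 (schur_compl_B M) x0 x1)
       = M 3 3 * w0^2 - 2 * M 2 3 * w0 * w1 + M 2 2 * w1^2"
proof -
  let ?d = "M 2 2 * M 3 3 - (M 2 3)^2"
  have G: "?d * schur_compl_B M i j = ?d * M i j
      - (M 3 3 * M i 2 * M j 2 - M 2 3 * (M i 2 * M j 3 + M i 3 * M j 2) + M 2 2 * M i 3 * M j 3)"
    for i j using d by (simp add: schur_compl_B_def right_diff_distrib)
  have "?d * (qform2 M x0 x1 x2 x3 - qform1 (schur_compl_B M) x0 x1)
      = ?d * qform2 M x0 x1 x2 x3 - (?d * schur_compl_B M 0 0) * x0^2
        - 2 * (?d * schur_compl_B M 0 1) * x0 * x1 - (?d * schur_compl_B M 1 1) * x1^2"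
    by (simp add: qform1_def algebra_simps)
  also have "\<dots> = M 3 3 * w0^2 - 2 * M 2 3 * w0 * w1 + M 2 2 * w1^2"
    unfolding G w0_def w1_def qform2_def by (simp add: power2_eq_square algebra_simps)
  finally show ?thesis .
qed

lemma schur_compl_B_cm:
  assumes sym: "sym_mat 2 M"
    and le: "\<And>x0 x1 x2 x3 y0 y1 y2 y3.
      x0 * y1 - x1 * y0 \<le> qform2 M x0 x1 x2 x3 + qform2 M y0 y1 y2 y3"
    and pos: "0 < M 2 2" and det: "0 < M 2 2 * M 3 3 - (M 2 3)^2"
  shows "is_cm 1 (schur_compl_B M)"
    and "qform1 (schur_compl_B M) x0 x1 \<le> qform2 M x0 x1 x2 x3"
proof -
  let ?d = "M 2 2 * M 3 3 - (M 2 3)^2" and ?G = "schur_compl_B M"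
  have d: "?d \<noteq> 0" using det by simp
  have "0 \<le> ?d * (qform2 M x0 x1 x2 x3 - qform1 ?G x0 x1)"
    unfolding qform2_minus_schur_compl_B[OF d] by (rule adjugate_form_nonneg[OF pos det])
  then show "qform1 ?G x0 x1 \<le> qform2 M x0 x1 x2 x3"
    using det by (simp add: zero_le_mult_iff)
  \<comment> \<open>\<open>(x2, x3) = - P\<^sup>-\<^sup>1 C\<^sup>T (x0, x1)\<close> minimises the form in the B-quadratures\<close>
  define m2 where
    "m2 x0 x1 = - (M 3 3 * (M 0 2 * x0 + M 1 2 * x1) - M 2 3 * (M 0 3 * x0 + M 1 3 * x1)) / ?d"
    for x0 x1
  define m3 where
    "m3 x0 x1 = - (M 2 2 * (M 0 3 * x0 + M 1 3 * x1) - M 2 3 * (M 0 2 * x0 + M 1 2 * x1)) / ?d"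
    for x0 x1
  have min: "qform2 M x0 x1 (m2 x0 x1) (m3 x0 x1) = qform1 ?G x0 x1" for x0 x1
  proof -
    have "?d * (qform2 M x0 x1 (m2 x0 x1) (m3 x0 x1) - qform1 ?G x0 x1) = 0"
      using qform2_minus_schur_compl_B[of M x0 x1 "m2 x0 x1" "m3 x0 x1"] det
      by (simp add: m2_def m3_def field_simps power2_eq_square)
    then show ?thesis using det by simp
  qed
  show "is_cm 1 ?G"
    unfolding is_cm_1_iff
  proof (intro conjI allI)
    show "?G 1 0 = ?G 0 1"
      using sym unfolding sym_mat_2_iff schur_compl_B_def by (simp add: algebra_simps)
    fix u0 u1 v0 v1 :: real
    have "u0 * v1 - u1 * v0
        \<le> qform2 M u0 u1 (m2 u0 u1) (m3 u0 u1) + qform2 M v0 v1 (m2 v0 v1) (m3 v0 v1)"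
      by (rule le)
    then show "u0 * v1 - u1 * v0 \<le> qform1 ?G u0 u1 + qform1 ?G v0 v1"
      by (simp only: min)
  qed
qed

section \<open>Separable outputs of local channels\<close>

lemma sym_mat_local_channel_2: "sym_mat n V \<Longrightarrow> sym_mat n (local_channel_2 xA yA xB yB V)"
  unfolding sym_mat_def local_channel_2_def Let_def by (simp add: mult.commute)

lemma qform2_local_channel_2:
  "qform2 (local_channel_2 xA yA xB yB V) x0 x1 x2 x3
     = qform2 V (xA * x0) (xA * x1) (xB * x2) (xB * x3) + yA * (x0^2 + x1^2) + yB * (x2^2 + x3^2)"
  unfolding qform2_def local_channel_2_def Let_def by (simp add: power2_eq_square algebra_simps)

lemma symp_A_le_noisy_qform2:
  assumes "is_cm 2 V" and "\<bar>\<kappa>\<bar> \<le> 1"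
    and A: "\<bar>1 - \<kappa> * xA^2\<bar> \<le> 2 * nA" and B: "\<bar>\<kappa> * xB^2\<bar> \<le> 2 * eB"
  shows "x0 * y1 - x1 * y0
    \<le> (qform2 V (xA * x0) (xA * x1) (xB * x2) (xB * x3)
         + nA * (x0^2 + x1^2) + eB * (x2^2 + x3^2))
      + (qform2 V (xA * y0) (xA * y1) (xB * y2) (xB * y3)
         + nA * (y0^2 + y1^2) + eB * (y2^2 + y3^2))"
proof -
  let ?QV = "qform2 V (xA * x0) (xA * x1) (xB * x2) (xB * x3)
    + qform2 V (xA * y0) (xA * y1) (xB * y2) (xB * y3)"
  have "\<kappa> * ((xA * x0) * (xA * y1) - (xA * x1) * (xA * y0)
      + (xB * x2) * (xB * y3) - (xB * x3) * (xB * y2)) \<le> ?QV"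
    by (rule is_cm_2_scaled_symp_le[OF assms(1,2)])
  then have "\<kappa> * (xA^2 * (x0 * y1 - x1 * y0) + xB^2 * (x2 * y3 - x3 * y2)) \<le> ?QV"
    by (simp add: power2_eq_square algebra_simps)
  moreover have "(1 - \<kappa> * xA^2) * (x0 * y1 - x1 * y0) \<le> nA * (x0^2 + x1^2 + y0^2 + y1^2)"
    using mult_symp_le[OF A] .
  moreover have "(- (\<kappa> * xB^2)) * (x2 * y3 - x3 * y2) \<le> eB * (x2^2 + x3^2 + y2^2 + y3^2)"
    using B by (intro mult_symp_le) simp
  ultimately show ?thesis by (simp add: algebra_simps)
qed

lemma pos_def_2_scale_add:
  fixes a b c t e :: real
  assumes "0 < a" "0 < c" "0 < a * c - b^2" "0 < t" "0 \<le> e"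
  shows "0 < t * a + e" and "0 < (t * a + e) * (t * c + e) - (t * b)^2"
proof -
  show "0 < t * a + e" using assms by (simp add: add_pos_nonneg)
  have "(t * a + e) * (t * c + e) - (t * b)^2 = t^2 * (a * c - b^2) + e * (t * (a + c) + e)"
    by (simp add: power2_eq_square algebra_simps)
  moreover have "0 < t^2 * (a * c - b^2)" using assms by simp
  moreover have "0 \<le> e * (t * (a + c) + e)" using assms by simp
  ultimately show "0 < (t * a + e) * (t * c + e) - (t * b)^2" by linarith
qed

lemma mode_B_pos_def_noisy:
  assumes V: "is_cm 2 V" and "xB \<noteq> 0" and "0 \<le> eB"
    and qM: "\<And>x0 x1 x2 x3. qform2 M x0 x1 x2 x3
      = qform2 V (xA * x0) (xA * x1) (xB * x2) (xB * x3) + nA * (x0^2 + x1^2) + eB * (x2^2 + x3^2)"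
  shows "0 < M 2 2" and "0 < M 2 2 * M 3 3 - (M 2 3)^2"
proof -
  have "M 2 2 = xB^2 * V 2 2 + eB" and "M 3 3 = xB^2 * V 3 3 + eB" and "M 2 3 = xB^2 * V 2 3"
    using qM[of 0 0 1 0] qM[of 0 0 0 1] qM[of 0 0 1 1]
    by (simp_all add: qform2_def power2_eq_square)
  moreover have "0 < V 2 2" "0 < V 3 3" "0 < V 2 2 * V 3 3 - (V 2 3)^2"
    using is_cm_1_uncertainty[OF is_cm_2_mode_B[OF V]] by simp_all
  ultimately show "0 < M 2 2" and "0 < M 2 2 * M 3 3 - (M 2 3)^2"
    using pos_def_2_scale_add[where a = "V 2 2" and b = "V 2 3" and c = "V 3 3"
        and t = "xB^2" and e = eB] assms(2,3)
    by (simp_all add: power_mult_distrib)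
qed

text \<open>Subtracting the vacuum from mode B leaves a matrix obeying the uncertainty relation
  for the symplectic form of mode A alone; its Schur complement over mode B is then a valid
  covariance matrix \<open>\<gamma>\<^sub>A\<close>, and the output dominates \<open>\<gamma>\<^sub>A \<oplus> \<one>/2\<close>.\<close>

lemma gauss_separable_2_by_vacuum_B:
  assumes V: "is_cm 2 V" and W: "sym_mat 2 W"
    and qW: "\<And>x0 x1 x2 x3. qform2 W x0 x1 x2 x3
      = qform2 V (xA * x0) (xA * x1) (xB * x2) (xB * x3) + nA * (x0^2 + x1^2) + nB * (x2^2 + x3^2)"
    and "xB \<noteq> 0" and "\<bar>\<kappa>\<bar> \<le> 1"
    and "\<bar>1 - \<kappa> * xA^2\<bar> \<le> 2 * nA" and "\<bar>\<kappa> * xB^2\<bar> \<le> 2 * nB - 1"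
  shows "gauss_separable_2 W"
proof -
  define eB where "eB = nB - 1/2"
  define M where "M i j = W i j - (if i = j \<and> 2 \<le> i then 1/2 else 0)" for i j
  have qW_M: "qform2 W x0 x1 x2 x3 = qform2 M x0 x1 x2 x3 + (x2^2 + x3^2) / 2" for x0 x1 x2 x3
    by (simp add: M_def qform2_def algebra_simps)
  have qM: "qform2 M x0 x1 x2 x3
      = qform2 V (xA * x0) (xA * x1) (xB * x2) (xB * x3) + nA * (x0^2 + x1^2) + eB * (x2^2 + x3^2)"
    for x0 x1 x2 x3
    using qW[of x0 x1 x2 x3] unfolding qW_M eB_def by (simp add: field_simps)
  have symM: "sym_mat 2 M"
    using W unfolding sym_mat_2_iff by (simp add: M_def)
  have le: "x0 * y1 - x1 * y0 \<le> qform2 M x0 x1 x2 x3 + qform2 M y0 y1 y2 y3"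
    for x0 x1 x2 x3 y0 y1 y2 y3
    unfolding qM using assms(5-7) by (intro symp_A_le_noisy_qform2[OF V]) (simp_all add: eB_def)
  have "0 < M 2 2" and "0 < M 2 2 * M 3 3 - (M 2 3)^2"
    using mode_B_pos_def_noisy[OF V assms(4) _ qM] assms(7) by (simp_all add: eB_def)
  then have G: "is_cm 1 (schur_compl_B M)"
    and G_le: "qform1 (schur_compl_B M) x0 x1 \<le> qform2 M x0 x1 x2 x3" for x0 x1 x2 x3
    using schur_compl_B_cm[OF symM le] by blast+
  let ?vac = "\<lambda>i j. if i = j then 1/2 else 0 :: real"
  show ?thesis
    unfolding gauss_separable_2_iff[OF W]
  proof (intro exI conjI allI)
    fix x0 x1 x2 x3 :: real
    have "qform1 ?vac x2 x3 = (x2^2 + x3^2) / 2"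
      by (simp add: qform1_def)
    then show "qform1 (schur_compl_B M) x0 x1 + qform1 ?vac x2 x3 \<le> qform2 W x0 x1 x2 x3"
      unfolding qW_M using G_le[of x0 x1 x2 x3] by linarith
  qed (fact G, fact is_cm_1_vacuum)
qed

lemma exists_kappa_noise_bounds:
  fixes xA xB nA nB :: real
  assumes "xA \<noteq> 0" and "xB \<noteq> 0" and CP: "\<bar>1 - xA^2\<bar> \<le> 2 * nA" and nB: "0 \<le> 2 * nB - 1"
    and sum: "0 \<le> (2 * nA - 1) / xA^2 + (2 * nB - 1) / xB^2"
  shows "\<exists>\<kappa>. \<bar>\<kappa>\<bar> \<le> 1 \<and> \<bar>1 - \<kappa> * xA^2\<bar> \<le> 2 * nA \<and> \<bar>\<kappa> * xB^2\<bar> \<le> 2 * nB - 1"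
proof -
  define \<kappa> where "\<kappa> = min 1 ((2 * nB - 1) / xB^2)"
  have xA2: "0 < xA^2" and xB2: "0 < xB^2" using assms(1,2) by simp_all
  have \<kappa>0: "0 \<le> \<kappa>" and \<kappa>1: "\<kappa> \<le> 1" using nB xB2 by (simp_all add: \<kappa>_def)
  have "\<kappa> * xB^2 \<le> 2 * nB - 1"
    using xB2 mult_right_mono[OF min.cobounded2[of 1 "(2 * nB - 1) / xB^2"], of "xB^2"]
    by (simp add: \<kappa>_def)
  moreover have "\<kappa> * xA^2 \<le> xA^2"
    using xA2 mult_right_mono[OF \<kappa>1, of "xA^2"] by simp
  then have "\<kappa> * xA^2 - 1 \<le> 2 * nA"
    using CP by linarith
  moreover have "1 - \<kappa> * xA^2 \<le> 2 * nA"
  proof (cases "\<kappa> = 1")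
    case True
    then show ?thesis using CP by simp
  next
    case False
    then have "\<kappa> = (2 * nB - 1) / xB^2" by (simp add: \<kappa>_def min_def split: if_splits)
    moreover have "(1 - 2 * nA) / xA^2 = - ((2 * nA - 1) / xA^2)"
      by (simp add: minus_divide_left)
    ultimately have "(1 - 2 * nA) / xA^2 \<le> \<kappa>" using sum by linarith
    then show ?thesis using xA2 by (simp add: field_simps)
  qed
  ultimately show ?thesis using \<kappa>0 \<kappa>1 by (intro exI[of _ \<kappa>]) auto
qed

lemma local_channel_2_separable:
  assumes V: "is_cm 2 V" and "xA \<noteq> 0" and "xB \<noteq> 0"
    and "\<bar>1 - xA^2\<bar> \<le> 2 * nA" and "\<bar>1 - xB^2\<bar> \<le> 2 * nB"
    and sum: "0 \<le> (2 * nA - 1) / xA^2 + (2 * nB - 1) / xB^2"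
  shows "gauss_separable_2 (local_channel_2 xA nA xB nB V)"
proof -
  let ?W = "local_channel_2 xA nA xB nB V"
  have symV: "sym_mat 2 V" using V unfolding is_cm_iff by blast
  have symW: "sym_mat 2 ?W" using sym_mat_local_channel_2[OF symV] .
  have "0 \<le> 2 * nA - 1 \<or> 0 \<le> 2 * nB - 1"
  proof (rule ccontr)
    assume "\<not> (0 \<le> 2 * nA - 1 \<or> 0 \<le> 2 * nB - 1)"
    then have "(2 * nA - 1) / xA^2 < 0" and "(2 * nB - 1) / xB^2 < 0"
      using assms(2,3) by (simp_all add: divide_neg_pos)
    then show False using sum by linarith
  qed
  then show ?thesis
  proof
    assume "0 \<le> 2 * nB - 1"
    then obtain \<kappa> where "\<bar>\<kappa>\<bar> \<le> 1" "\<bar>1 - \<kappa> * xA^2\<bar> \<le> 2 * nA" "\<bar>\<kappa> * xB^2\<bar> \<le> 2 * nB - 1"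
      using exists_kappa_noise_bounds assms by blast
    then show ?thesis
      using gauss_separable_2_by_vacuum_B[OF V symW qform2_local_channel_2] assms(3) by blast
  next
    assume "0 \<le> 2 * nA - 1"
    moreover have "0 \<le> (2 * nB - 1) / xB^2 + (2 * nA - 1) / xA^2" using sum by simp
    ultimately obtain \<kappa> where "\<bar>\<kappa>\<bar> \<le> 1" "\<bar>1 - \<kappa> * xB^2\<bar> \<le> 2 * nB" "\<bar>\<kappa> * xA^2\<bar> \<le> 2 * nA - 1"
      using exists_kappa_noise_bounds assms by blast
    moreover have "qform2 (swap_modes ?W) x0 x1 x2 x3
        = qform2 (swap_modes V) (xB * x0) (xB * x1) (xA * x2) (xA * x3)
          + nB * (x0^2 + x1^2) + nA * (x2^2 + x3^2)" for x0 x1 x2 x3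
      by (simp add: qform2_swap_modes symV symW qform2_local_channel_2)
    ultimately have "gauss_separable_2 (swap_modes ?W)"
      using gauss_separable_2_by_vacuum_B[OF is_cm_2_swap_modes[OF V] sym_mat_swap_modes[OF symW]]
        assms(2) by blast
    then show ?thesis using gauss_separable_2_swap_modes[OF symW] by blast
  qed
qed

section \<open>Entangled outputs of local channels\<close>

text \<open>With \<open>k = e\<^sup>2\<^sup>r\<close> this is the two-mode squeezed vacuum of squeezing \<open>r\<close>:
  \<open>cosh(2r)/2\<close> on the diagonal and \<open>\<plusminus>sinh(2r)/2\<close> between the modes.\<close>

definition two_mode_squeezed :: "real \<Rightarrow> nat \<Rightarrow> nat \<Rightarrow> real" where
  "two_mode_squeezed k i j =
     (if i = j then (k + 1/k) / 4
      else if {i, j} = {0, 2} then (k - 1/k) / 4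
      else if {i, j} = {1, 3} then - (k - 1/k) / 4
      else 0)"

lemma is_cm_two_mode_squeezed:
  assumes "0 < k"
  shows "is_cm 2 (two_mode_squeezed k)"
  unfolding is_cm_2_iff
proof (intro conjI allI)
  show "sym_mat 2 (two_mode_squeezed k)"
    by (simp add: sym_mat_2_iff two_mode_squeezed_def insert_commute)
  fix x0 x1 x2 x3 y0 y1 y2 y3 :: real
  let ?V = "two_mode_squeezed k"
  let ?D = "qform2 ?V x0 x1 x2 x3 + qform2 ?V y0 y1 y2 y3 - (x0 * y1 - x1 * y0 + x2 * y3 - x3 * y2)"
  have "4 * k * ?D
      = (k * (x0 + x2) - (y1 + y3))^2 + (k * (y1 - y3) - (x0 - x2))^2
        + (k * (x1 - x3) + (y0 - y2))^2 + (k * (y0 + y2) + (x1 + x3))^2"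
    using assms unfolding qform2_def two_mode_squeezed_def
    by (simp add: doubleton_eq_iff field_simps power2_eq_square)
  then have "0 \<le> 4 * k * ?D"
    by simp
  then show "x0 * y1 - x1 * y0 + x2 * y3 - x3 * y2 \<le> qform2 ?V x0 x1 x2 x3 + qform2 ?V y0 y1 y2 y3"
    using assms by (simp add: zero_le_mult_iff)
qed

lemma qform2_two_mode_squeezed_EPR:
  "qform2 (two_mode_squeezed k) 1 0 (-1) 0 = 1/k"
  "qform2 (two_mode_squeezed k) 0 1 0 1 = 1/k"
  by (simp_all add: qform2_def two_mode_squeezed_def doubleton_eq_iff field_simps)

text \<open>The Duan--Giedke--Cirac--Zoller bound on the EPR variances of separable states.\<close>

lemma gauss_separable_2_EPR_bound:
  assumes "sym_mat 2 W" and "gauss_separable_2 W"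
  shows "p^2 + q^2 \<le> qform2 W p 0 (-q) 0 + qform2 W 0 p 0 q"
proof -
  obtain GA GB where GA: "is_cm 1 GA" and GB: "is_cm 1 GB"
    and le: "\<forall>x0 x1 x2 x3. qform1 GA x0 x1 + qform1 GB x2 x3 \<le> qform2 W x0 x1 x2 x3"
    using assms unfolding gauss_separable_2_iff[OF assms(1)] by blast
  have "p * p - 0 * 0 \<le> qform1 GA p 0 + qform1 GA 0 p"
    using GA unfolding is_cm_1_iff by blast
  moreover have "(- q) * (- q) - 0 * 0 \<le> qform1 GB (- q) 0 + qform1 GB 0 (- q)"
    using GB unfolding is_cm_1_iff by blast
  moreover have "qform1 GA p 0 + qform1 GB (- q) 0 \<le> qform2 W p 0 (- q) 0"
    and "qform1 GA 0 p + qform1 GB 0 q \<le> qform2 W 0 p 0 q"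
    using le by blast+
  moreover have "qform1 GB 0 (- q) = qform1 GB 0 q"
    by (simp add: qform1_def)
  ultimately show ?thesis by (simp add: power2_eq_square)
qed

lemma local_channel_2_separable_imp:
  assumes "xA \<noteq> 0" and "xB \<noteq> 0"
    and sep: "\<forall>V. is_cm 2 V \<longrightarrow> gauss_separable_2 (local_channel_2 xA nA xB nB V)"
  shows "0 \<le> (2 * nA - 1) / xA^2 + (2 * nB - 1) / xB^2"
proof -
  let ?S = "(2 * nA - 1) / xA^2 + (2 * nB - 1) / xB^2"
  have bound: "0 \<le> 2 / k + ?S" if "0 < k" for k
  proof -
    let ?V = "two_mode_squeezed k"
    let ?W = "local_channel_2 xA nA xB nB ?V"
    have "is_cm 2 ?V" using is_cm_two_mode_squeezed[OF that] .
    then have "sym_mat 2 ?W" and "gauss_separable_2 ?W"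
      using sep sym_mat_local_channel_2 unfolding is_cm_iff by blast+
    then have "(1 / xA)^2 + (1 / xB)^2
        \<le> qform2 ?W (1 / xA) 0 (- (1 / xB)) 0 + qform2 ?W 0 (1 / xA) 0 (1 / xB)"
      by (rule gauss_separable_2_EPR_bound)
    also have "\<dots> = 2 / k + 2 * nA / xA^2 + 2 * nB / xB^2"
      unfolding qform2_local_channel_2 using assms(1,2)
      by (simp add: qform2_two_mode_squeezed_EPR power_one_over)
    finally show ?thesis
      by (simp add: diff_divide_distrib power_one_over)
  qed
  have "- ?S \<le> 0 + e" if "0 < e" for e
    using bound[of "2 / e"] that by simp
  then have "- ?S \<le> 0"
    by (rule field_le_epsilon)
  then show ?thesis by linarith
qed

lemma local_channel_2_entanglement_annihilating_iff:
  assumes "xA \<noteq> 0" and "xB \<noteq> 0" and "\<bar>1 - xA^2\<bar> \<le> 2 * nA" and "\<bar>1 - xB^2\<bar> \<le> 2 * nB"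
  shows "(\<forall>V. is_cm 2 V \<longrightarrow> gauss_separable_2 (local_channel_2 xA nA xB nB V))
         \<longleftrightarrow> 0 \<le> (2 * nA - 1) / xA^2 + (2 * nB - 1) / xB^2"
  using local_channel_2_separable local_channel_2_separable_imp assms by blast

section \<open>Amplification followed by loss\<close>

lemma local_channel_2_comp:
  "local_channel_2 xA yA xB yB (local_channel_2 xA' yA' xB' yB' V)
     = local_channel_2 (xA * xA') (xA^2 * yA' + yA) (xB * xB') (xB^2 * yB' + yB) V"
  unfolding local_channel_2_def Let_def by (auto simp: fun_eq_iff power2_eq_square algebra_simps)

lemma loss_2_amp_2:
  assumes "lA \<le> 1" and "lB \<le> 1"
  shows "loss_2 lA lB (amp_2 aA aB V)
    = local_channel_2 (sqrt ((1 - lA) * aA)) (((1 - lA) * (aA - 1) + lA) / 2)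
                      (sqrt ((1 - lB) * aB)) (((1 - lB) * (aB - 1) + lB) / 2) V"
proof -
  have "sqrt (1 - l) * sqrt a = sqrt ((1 - l) * a)"
    and "(sqrt (1 - l))^2 * ((a - 1) / 2) + l / 2 = ((1 - l) * (a - 1) + l) / 2"
    if "l \<le> 1" for a l :: real
    using that by (simp_all add: real_sqrt_mult add_divide_distrib)
  then show ?thesis
    using assms unfolding loss_2_def amp_2_def local_channel_2_comp
    by (simp add: add_divide_distrib)
qed

lemma amp_loss_gain_noise:
  fixes a l :: real
  assumes "1 \<le> a" and "0 \<le> l" and "l < 1"
  defines "x \<equiv> sqrt ((1 - l) * a)" and "n \<equiv> ((1 - l) * (a - 1) + l) / 2"
  shows "x \<noteq> 0" and "\<bar>1 - x^2\<bar> \<le> 2 * n" and "(2 * n - 1) / x^2 = 1 - 2 / a"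
proof -
  have x2: "x^2 = (1 - l) * a" using assms(1,3) unfolding x_def by simp
  show "x \<noteq> 0" using assms(1,3) unfolding x_def by simp
  have "1 - l \<le> (1 - l) * a" using assms by simp
  moreover have "2 * n = (1 - l) * a - 1 + 2 * l" unfolding n_def by (simp add: field_simps)
  ultimately show "\<bar>1 - x^2\<bar> \<le> 2 * n" unfolding x2 abs_le_iff using assms(2) by linarith
  show "(2 * n - 1) / x^2 = 1 - 2 / a"
    unfolding x2 n_def using assms(1,3) by (simp add: field_simps)
qed

theorem proposition8:
  fixes aA aB lA lB :: real
  assumes "1 \<le> aA" and "1 \<le> aB"
    and "0 \<le> lA" and "lA < 1" and "0 \<le> lB" and "lB < 1"
  shows "(\<forall>V. is_cm 2 V \<longrightarrow> gauss_separable_2 (loss_2 lA lB (amp_2 aA aB V)))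
         \<longleftrightarrow> 1 / aA + 1 / aB \<le> 1"
proof -
  note A = amp_loss_gain_noise[OF assms(1,3,4)] and B = amp_loss_gain_noise[OF assms(2,5,6)]
  have "(\<forall>V. is_cm 2 V \<longrightarrow> gauss_separable_2 (loss_2 lA lB (amp_2 aA aB V)))
        \<longleftrightarrow> 0 \<le> (1 - 2 / aA) + (1 - 2 / aB)"
    using local_channel_2_entanglement_annihilating_iff[OF A(1) B(1) A(2) B(2)] assms(4,6)
    by (simp only: loss_2_amp_2 A(3) B(3))
  also have "\<dots> \<longleftrightarrow> 1 / aA + 1 / aB \<le> 1"
    by (simp add: divide_inverse) linarith
  finally show ?thesis .
qed

end
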